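(* Let $G$ be a compact, connected Lie group whose Lie algebra is simple, and let $(\pi,V)$ be a nontrivial irreducible representation of $G$ on a finite-dimensional real vector space $V$. If $v\in V$ is nonzero, then there exist points $g_1,\ldots,g_n\in G$ such that $0$ lies in the interior of the convex hull of $\pi(g_1)v,\pi(g_2)v,\ldots,\pi(g_n)v$. *)

theory Defs
  imports "HOL-Analysis.Analysis"
begin

definition op_exp :: "('w::euclidean_space \<Rightarrow>\<^sub>L 'w) \<Rightarrow> ('w \<Rightarrow>\<^sub>L 'w)" where
  "op_exp X = (\<Sum>k. (1 / fact k) *\<^sub>R (((\<lambda>Y. X o\<^sub>L Y) ^^ k) id_blinfun))"

definition op_bracket :: "('w::euclidean_space \<Rightarrow>\<^sub>L 'w) \<Rightarrow> ('w \<Rightarrow>\<^sub>L 'w) \<Rightarrow> ('w \<Rightarrow>\<^sub>L 'w)" where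
  "op_bracket X Y = X o\<^sub>L Y - Y o\<^sub>L X"

definition compact_connected_linear_group :: "('w::euclidean_space \<Rightarrow>\<^sub>L 'w) set \<Rightarrow> bool" where
  "compact_connected_linear_group G \<longleftrightarrow>
     compact G \<and> connected G \<and> id_blinfun \<in> G \<and>
     (\<forall>g\<in>G. \<forall>h\<in>G. g o\<^sub>L h \<in> G) \<and>
     (\<forall>g\<in>G. \<exists>h\<in>G. g o\<^sub>L h = id_blinfun \<and> h o\<^sub>L g = id_blinfun)"

definition lie_algebra_of :: "('w::euclidean_space \<Rightarrow>\<^sub>L 'w) set \<Rightarrow> ('w \<Rightarrow>\<^sub>L 'w) set" where
  "lie_algebra_of G = {X. \<forall>t::real. op_exp (t *\<^sub>R X) \<in> G}"

definition simple_lie_algebra :: "('w::euclidean_space \<Rightarrow>\<^sub>L 'w) set \<Rightarrow> bool" where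
  "simple_lie_algebra L \<longleftrightarrow>
     subspace L \<and> (\<forall>X\<in>L. \<forall>Y\<in>L. op_bracket X Y \<in> L) \<and>
     (\<exists>X\<in>L. \<exists>Y\<in>L. op_bracket X Y \<noteq> 0) \<and>
     (\<forall>I. subspace I \<and> I \<subseteq> L \<and> (\<forall>X\<in>L. \<forall>Y\<in>I. op_bracket X Y \<in> I) \<longrightarrow> I = {0} \<or> I = L)"

definition representation ::
  "('w::euclidean_space \<Rightarrow>\<^sub>L 'w) set \<Rightarrow> (('w \<Rightarrow>\<^sub>L 'w) \<Rightarrow> ('v::euclidean_space \<Rightarrow>\<^sub>L 'v)) \<Rightarrow> bool" where
  "representation G \<pi> \<longleftrightarrow> continuous_on G \<pi> \<and> \<pi> id_blinfun = id_blinfun \<and>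
     (\<forall>g\<in>G. \<forall>h\<in>G. \<pi> (g o\<^sub>L h) = \<pi> g o\<^sub>L \<pi> h)"

definition irreducible_rep ::
  "('w::euclidean_space \<Rightarrow>\<^sub>L 'w) set \<Rightarrow> (('w \<Rightarrow>\<^sub>L 'w) \<Rightarrow> ('v::euclidean_space \<Rightarrow>\<^sub>L 'v)) \<Rightarrow> bool" where
  "irreducible_rep G \<pi> \<longleftrightarrow>
     (\<forall>U::'v set. subspace U \<and> (\<forall>g\<in>G. \<forall>u\<in>U. \<pi> g u \<in> U) \<longrightarrow> U = {0} \<or> U = UNIV)"

definition nontrivial_rep ::
  "('w::euclidean_space \<Rightarrow>\<^sub>L 'w) set \<Rightarrow> (('w \<Rightarrow>\<^sub>L 'w) \<Rightarrow> ('v::euclidean_space \<Rightarrow>\<^sub>L 'v)) \<Rightarrow> bool" where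
  "nontrivial_rep G \<pi> \<longleftrightarrow> (\<exists>g\<in>G. \<pi> g \<noteq> id_blinfun)"

end

theory Submission
  imports Defs
begin

text \<open>A compact group \<open>K\<close> of operators fixes a point of every nonempty compact convex
  \<open>K\<close>-invariant set (Kakutani): the point of the set minimising the invariant, strictly convex
  norm \<open>x \<mapsto> sup {\<parallel>A x\<parallel> | A \<in> K}\<close> is fixed. Applied to the convex hull of the orbit of \<open>v\<close> this
  puts \<open>0\<close> in that hull, as a nontrivial irreducible representation has no nonzero fixed
  vector; by irreducibility the orbit also spans \<open>V\<close>. Hence some finite \<open>F \<subseteq> G\<close> has
  \<open>0 \<in> conv (\<pi>(F) v)\<close> with \<open>\<pi>(F) v\<close> spanning, so \<open>conv (\<pi>(F) v)\<close> has an interior point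
  \<open>p\<close>. Choosing a finite \<open>H\<close> with \<open>0 \<in> conv (\<pi>(H) p)\<close>, each \<open>\<pi>(h) p\<close> is interior to
  \<open>conv (\<pi>(h F) v)\<close>, so \<open>0\<close> is interior to \<open>conv (\<pi>(H F) v)\<close>.\<close>

definition compact_operator_group :: "('v::real_normed_vector \<Rightarrow>\<^sub>L 'v) set \<Rightarrow> bool" where
  "compact_operator_group K \<longleftrightarrow> compact K \<and> id_blinfun \<in> K \<and>
     (\<forall>A\<in>K. \<forall>B\<in>K. A o\<^sub>L B \<in> K) \<and> (\<forall>A\<in>K. \<exists>B\<in>K. B o\<^sub>L A = id_blinfun)"

definition orbit_norm :: "('v::real_normed_vector \<Rightarrow>\<^sub>L 'v) set \<Rightarrow> 'v \<Rightarrow> real" where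
  "orbit_norm K x = (SUP A\<in>K. norm (blinfun_apply A x))"

lemma norm_midpoint_sq:
  fixes a b :: "'a::real_inner"
  shows "(norm ((1/2) *\<^sub>R (a + b)))\<^sup>2 = ((norm a)\<^sup>2 + (norm b)\<^sup>2) / 2 - (norm (a - b))\<^sup>2 / 4"
  by (simp add: power2_norm_eq_inner inner_add_left inner_add_right inner_diff_left
      inner_diff_right inner_commute field_simps)

context
  fixes K :: "('v::real_inner \<Rightarrow>\<^sub>L 'v) set"
  assumes K: "compact_operator_group K"
begin

lemma compact_operator_group_compact: "compact K"
  and compact_operator_group_id: "id_blinfun \<in> K"
  and compact_operator_group_compose: "A \<in> K \<Longrightarrow> B \<in> K \<Longrightarrow> A o\<^sub>L B \<in> K"
  using K unfolding compact_operator_group_def by blast+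

lemma compact_operator_group_left_inverse:
  assumes "A \<in> K" shows "\<exists>B\<in>K. \<forall>x. B (A x) = x"
proof -
  obtain B where "B \<in> K" "B o\<^sub>L A = id_blinfun"
    using K assms unfolding compact_operator_group_def by blast
  then show ?thesis by (metis blinfun_apply_blinfun_compose blinfun_apply_id_blinfun)
qed

lemma compact_operator_group_inj:
  assumes "A \<in> K" shows "inj (blinfun_apply A)"
proof -
  obtain B where "\<forall>x. B (A x) = x" using compact_operator_group_left_inverse[OF assms] by blast
  then show ?thesis by (metis injI)
qed

lemma compact_operator_group_norm_bound:
  "\<exists>M\<ge>0. \<forall>A\<in>K. \<forall>x. norm (A x) \<le> M * norm x"
proof -
  have "bounded K" using compact_operator_group_compact by (rule compact_imp_bounded)
  then obtain M where M: "\<And>A. A \<in> K \<Longrightarrow> norm A \<le> M" unfolding bounded_iff by blast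
  have "0 \<le> M" using M[OF compact_operator_group_id] norm_ge_zero order_trans by metis
  moreover have "norm (A x) \<le> M * norm x" if "A \<in> K" for A x
    using norm_blinfun[of A x] mult_right_mono[OF M[OF that] norm_ge_zero, of x] by linarith
  ultimately show ?thesis by blast
qed

lemma norm_le_orbit_norm:
  assumes "A \<in> K" shows "norm (A x) \<le> orbit_norm K x"
proof -
  obtain M where "\<forall>A\<in>K. \<forall>x. norm (A x) \<le> M * norm x"
    using compact_operator_group_norm_bound by blast
  then have "bdd_above ((\<lambda>A. norm (blinfun_apply A x)) ` K)" by (intro bdd_aboveI2) auto
  then show ?thesis unfolding orbit_norm_def using assms by (rule cSUP_upper2) auto
qed

lemma orbit_norm_attained: "\<exists>A\<in>K. orbit_norm K x = norm (A x)"
proof -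
  have "continuous_on K (\<lambda>A. norm (blinfun_apply A x))" by (intro continuous_intros)
  then obtain A0 where A0: "A0 \<in> K" "\<forall>A\<in>K. norm (A x) \<le> norm (A0 x)"
    using continuous_attains_sup[OF compact_operator_group_compact] compact_operator_group_id
    by (metis empty_iff)
  have "orbit_norm K x \<le> norm (A0 x)"
    unfolding orbit_norm_def using A0 by (intro cSUP_least) auto
  then have "orbit_norm K x = norm (A0 x)" using norm_le_orbit_norm[OF A0(1)] by (rule antisym)
  then show ?thesis using A0(1) by blast
qed

lemma orbit_norm_nonneg: "0 \<le> orbit_norm K x"
proof -
  obtain A where "A \<in> K" "orbit_norm K x = norm (A x)" using orbit_norm_attained by blast
  then show ?thesis by simp
qed

lemma continuous_on_orbit_norm: "continuous_on S (orbit_norm K)"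
proof -
  obtain M where M: "0 \<le> M" "\<forall>A\<in>K. \<forall>x. norm (A x) \<le> M * norm x"
    using compact_operator_group_norm_bound by blast
  have lip: "orbit_norm K x \<le> orbit_norm K y + M * norm (x - y)" for x y
  proof -
    obtain A where A: "A \<in> K" "orbit_norm K x = norm (A x)" using orbit_norm_attained by blast
    have "norm (A x) \<le> norm (A y) + norm (A (x - y))"
      using norm_triangle_ineq[of "A y" "A (x - y)"] by (simp add: blinfun.diff_right)
    then show ?thesis
      using A norm_le_orbit_norm[OF A(1), of y] M(2)[rule_format, OF A(1), of "x - y"] by linarith
  qed
  have "lipschitz_on M S (orbit_norm K)"
  proof (rule lipschitz_onI[OF _ M(1)])
    fix x y
    show "dist (orbit_norm K x) (orbit_norm K y) \<le> M * dist x y"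
      using lip[of x y] lip[of y x] norm_minus_commute[of x y]
      by (simp add: dist_real_def dist_norm abs_le_iff)
  qed
  then show ?thesis by (rule lipschitz_on_continuous_on)
qed

lemma orbit_norm_invariant:
  assumes "A \<in> K" shows "orbit_norm K (A x) = orbit_norm K x"
proof -
  have le: "orbit_norm K (B y) \<le> orbit_norm K y" if "B \<in> K" for B y
  proof -
    obtain C where C: "C \<in> K" "orbit_norm K (B y) = norm (C (B y))" using orbit_norm_attained by blast
    have "C o\<^sub>L B \<in> K" using C(1) that by (rule compact_operator_group_compose)
    then show ?thesis using C(2) norm_le_orbit_norm[of "C o\<^sub>L B" y] by simp
  qed
  obtain B where B: "B \<in> K" "\<forall>x. B (A x) = x" using compact_operator_group_left_inverse[OF assms] by blast
  show ?thesis using le[OF assms, of x] le[OF B(1), of "A x"] B(2) by simp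
qed

text \<open>The supremum at the midpoint is attained by one operator, which is injective, so the
  parallelogram law in its image gives a strict gain.\<close>
lemma orbit_norm_midpoint_less:
  assumes "x \<noteq> y"
  shows "orbit_norm K ((1/2) *\<^sub>R (x + y)) < max (orbit_norm K x) (orbit_norm K y)"
proof -
  let ?N = "orbit_norm K" and ?z = "(1/2) *\<^sub>R (x + y)"
  obtain A where A: "A \<in> K" "?N ?z = norm (A ?z)" using orbit_norm_attained by blast
  have "A x \<noteq> A y" using compact_operator_group_inj[OF A(1)] assms by (meson injD)
  then have pos: "0 < (norm (A x - A y))\<^sup>2" by simp
  have "A ?z = (1/2) *\<^sub>R (A x + A y)" by (simp add: blinfun.add_right blinfun.scaleR_right)
  then have "(?N ?z)\<^sup>2 = (norm ((1/2) *\<^sub>R (A x + A y)))\<^sup>2" using A(2) by (simp only:)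
  also have "\<dots> = ((norm (A x))\<^sup>2 + (norm (A y))\<^sup>2) / 2 - (norm (A x - A y))\<^sup>2 / 4"
    by (rule norm_midpoint_sq)
  also have "\<dots> < ((norm (A x))\<^sup>2 + (norm (A y))\<^sup>2) / 2" using pos by linarith
  also have "\<dots> \<le> ((max (?N x) (?N y))\<^sup>2 + (max (?N x) (?N y))\<^sup>2) / 2"
  proof -
    have "norm (A x) \<le> max (?N x) (?N y)" "norm (A y) \<le> max (?N x) (?N y)"
      using order_trans[OF norm_le_orbit_norm[OF A(1)] max.cobounded1]
        order_trans[OF norm_le_orbit_norm[OF A(1)] max.cobounded2] by blast+
    then show ?thesis by (intro divide_right_mono add_mono power_mono) simp_all
  qed
  finally have "(?N ?z)\<^sup>2 < (max (?N x) (?N y))\<^sup>2" by simp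
  moreover have "0 \<le> max (?N x) (?N y)" using orbit_norm_nonneg max.coboundedI1 by blast
  ultimately show ?thesis by (rule power_less_imp_less_base)
qed

theorem compact_operator_group_fixed_point:
  assumes "compact C" "convex C" "C \<noteq> {}" "\<And>A x. A \<in> K \<Longrightarrow> x \<in> C \<Longrightarrow> A x \<in> C"
  shows "\<exists>m\<in>C. \<forall>A\<in>K. A m = m"
proof -
  obtain m where m: "m \<in> C" "\<And>y. y \<in> C \<Longrightarrow> orbit_norm K m \<le> orbit_norm K y"
    using continuous_attains_inf[OF assms(1,3) continuous_on_orbit_norm] by blast
  have "A m = m" if A: "A \<in> K" for A
  proof (rule ccontr)
    assume "A m \<noteq> m"
    then have "orbit_norm K ((1/2) *\<^sub>R (A m + m)) < max (orbit_norm K (A m)) (orbit_norm K m)"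
      by (rule orbit_norm_midpoint_less)
    then have "orbit_norm K ((1/2) *\<^sub>R (A m + m)) < orbit_norm K m"
      by (simp only: orbit_norm_invariant[OF A] max.idem)
    moreover have "(1/2) *\<^sub>R (A m + m) \<in> C"
      using convexD[OF assms(2) assms(4)[OF A m(1)] m(1), of "1/2" "1/2"]
      by (simp add: scaleR_add_right)
    ultimately show False using m(2) not_le by blast
  qed
  then show ?thesis using m(1) by blast
qed

end

lemma linear_blinfun_apply: "linear (blinfun_apply A)"
  by (rule bounded_linear.linear[OF blinfun.bounded_linear_right])

lemma convex_hull_finite_subset:
  fixes x :: "'a::real_vector"
  assumes "x \<in> convex hull S"
  obtains T where "finite T" "T \<subseteq> S" "x \<in> convex hull T"
proof -
  obtain T u where "finite T" "T \<subseteq> S" "\<forall>y\<in>T. 0 \<le> u y" "sum u T = 1" "(\<Sum>y\<in>T. u y *\<^sub>R y) = x"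
    using assms unfolding convex_hull_explicit by blast
  then show thesis using that convex_hull_finite[of T] by blast
qed

lemma finite_subset_span_eq:
  fixes S :: "'a::euclidean_space set"
  obtains T where "finite T" "T \<subseteq> S" "span T = span S"
proof -
  obtain B where B: "B \<subseteq> S" "independent B" "S \<subseteq> span B" by (rule basis_exists)
  have "span B = span S"
    by (rule subset_antisym[OF span_mono[OF B(1)] span_minimal[OF B(3) subspace_span]])
  then show thesis using that finiteI_independent[OF B(2)] B(1) by blast
qed

lemma interior_convex_hull_nonempty:
  fixes S :: "'a::euclidean_space set"
  assumes "0 \<in> convex hull S" "span S = UNIV"
  shows "interior (convex hull S) \<noteq> {}"
proof -
  have "0 \<in> affine hull S" using assms(1) convex_hull_subset_affine_hull by blast
  then have "affine hull S = span S" by (rule affine_hull_span_0)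
  then have "rel_interior (convex hull S) = interior (convex hull S)"
    using assms(2) by (intro rel_interior_interior) simp
  then show ?thesis using assms(1) rel_interior_eq_empty[of "convex hull S"] by auto
qed

lemma compact_connected_linear_groupD:
  assumes "compact_connected_linear_group G"
  shows "compact G" "id_blinfun \<in> G" "\<And>g h. g \<in> G \<Longrightarrow> h \<in> G \<Longrightarrow> g o\<^sub>L h \<in> G"
    "\<And>g. g \<in> G \<Longrightarrow> \<exists>h\<in>G. h o\<^sub>L g = id_blinfun"
  using assms unfolding compact_connected_linear_group_def by blast+

lemma representationD:
  assumes "representation G \<pi>"
  shows "continuous_on G \<pi>" "\<pi> id_blinfun = id_blinfun"
    "\<And>g h. g \<in> G \<Longrightarrow> h \<in> G \<Longrightarrow> \<pi> (g o\<^sub>L h) = \<pi> g o\<^sub>L \<pi> h"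
  using assms unfolding representation_def by blast+

lemma representation_apply_compose:
  assumes "representation G \<pi>" "g \<in> G" "h \<in> G"
  shows "\<pi> (g o\<^sub>L h) x = \<pi> g (\<pi> h x)"
  using representationD(3)[OF assms] by simp

lemma compact_operator_group_representation_image:
  assumes G: "compact_connected_linear_group G" and \<pi>: "representation G \<pi>"
  shows "compact_operator_group (\<pi> ` G)"
  unfolding compact_operator_group_def
proof (intro conjI ballI)
  show "compact (\<pi> ` G)"
    using representationD(1)[OF \<pi>] compact_connected_linear_groupD(1)[OF G]
    by (rule compact_continuous_image)
  show "id_blinfun \<in> \<pi> ` G"
    using representationD(2)[OF \<pi>] compact_connected_linear_groupD(2)[OF G] by (metis image_eqI)
  fix A B assume "A \<in> \<pi> ` G" "B \<in> \<pi> ` G"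
  then obtain g h where gh: "g \<in> G" "h \<in> G" "A = \<pi> g" "B = \<pi> h" by blast
  show "A o\<^sub>L B \<in> \<pi> ` G"
    using gh representationD(3)[OF \<pi> gh(1,2)] compact_connected_linear_groupD(3)[OF G gh(1,2)]
    by (metis image_eqI)
  obtain k where k: "k \<in> G" "k o\<^sub>L g = id_blinfun"
    using compact_connected_linear_groupD(4)[OF G gh(1)] by blast
  then have "\<pi> k o\<^sub>L A = id_blinfun"
    using gh(3) representationD(2,3)[OF \<pi>] gh(1) by metis
  then show "\<exists>C\<in>\<pi> ` G. C o\<^sub>L A = id_blinfun" using k(1) by blast
qed

lemma irreducible_rep_fixed_vector_eq_zero:
  assumes "irreducible_rep G \<pi>" "nontrivial_rep G \<pi>" "\<forall>g\<in>G. \<pi> g x = x"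
  shows "x = 0"
proof -
  define F where "F = {y. \<forall>g\<in>G. \<pi> g y = y}"
  have "subspace F" unfolding F_def subspace_def
    by (auto simp: blinfun.add_right blinfun.scaleR_right)
  moreover have "\<forall>g\<in>G. \<forall>u\<in>F. \<pi> g u \<in> F" unfolding F_def by auto
  ultimately have "F = {0} \<or> F = UNIV" using assms(1) unfolding irreducible_rep_def by blast
  moreover have "F \<noteq> UNIV"
  proof
    assume "F = UNIV"
    then have "\<pi> g = id_blinfun" if "g \<in> G" for g
      using that unfolding F_def by (intro blinfun_eqI) (simp add: set_eq_iff)
    then show False using assms(2) unfolding nontrivial_rep_def by blast
  qed
  ultimately show ?thesis using assms(3) unfolding F_def by blast
qed

lemma representation_orbit_invariant:
  assumes "compact_connected_linear_group G" "representation G \<pi>" "h \<in> G"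
  shows "\<pi> h ` (\<lambda>g. \<pi> g v) ` G \<subseteq> (\<lambda>g. \<pi> g v) ` G"
proof
  fix y assume "y \<in> \<pi> h ` (\<lambda>g. \<pi> g v) ` G"
  then obtain g where g: "g \<in> G" "y = \<pi> (h o\<^sub>L g) v"
    using representation_apply_compose[OF assms(2,3)] by auto
  moreover have "h o\<^sub>L g \<in> G" using compact_connected_linear_groupD(3)[OF assms(1,3) g(1)] .
  ultimately show "y \<in> (\<lambda>g. \<pi> g v) ` G" by blast
qed

lemma zero_in_convex_hull_orbit:
  assumes G: "compact_connected_linear_group G" and \<pi>: "representation G \<pi>"
    and "irreducible_rep G \<pi>" "nontrivial_rep G \<pi>"
  shows "0 \<in> convex hull ((\<lambda>g. \<pi> g v) ` G)"
proof -
  let ?C = "convex hull ((\<lambda>g. \<pi> g v) ` G)"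
  have compact: "compact ?C"
    using representationD(1)[OF \<pi>] compact_connected_linear_groupD(1)[OF G]
    by (intro compact_convex_hull compact_continuous_image continuous_intros)
  have nonempty: "?C \<noteq> {}" using compact_connected_linear_groupD(2)[OF G] by auto
  have invariant: "A x \<in> ?C" if A: "A \<in> \<pi> ` G" and x: "x \<in> ?C" for A x
  proof -
    obtain h where h: "h \<in> G" "A = \<pi> h" using A by blast
    have "A x \<in> \<pi> h ` ?C" using x unfolding h(2) by (rule imageI)
    also have "\<dots> = convex hull (\<pi> h ` (\<lambda>g. \<pi> g v) ` G)"
      by (rule convex_hull_linear_image[OF linear_blinfun_apply])
    also have "\<dots> \<subseteq> ?C" by (rule hull_mono[OF representation_orbit_invariant[OF G \<pi> h(1)]])
    finally show ?thesis .
  qed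
  obtain m where m: "m \<in> ?C" "\<forall>A\<in>\<pi> ` G. A m = m"
    using compact_operator_group_fixed_point[OF compact_operator_group_representation_image[OF G \<pi>]
        compact convex_convex_hull nonempty invariant] by blast
  have "m = 0" using m(2) by (intro irreducible_rep_fixed_vector_eq_zero[OF assms(3,4)]) blast
  then show ?thesis using m(1) by simp
qed

lemma span_orbit_eq_UNIV:
  assumes G: "compact_connected_linear_group G" and \<pi>: "representation G \<pi>"
    and irr: "irreducible_rep G \<pi>" and "v \<noteq> 0"
  shows "span ((\<lambda>g. \<pi> g v) ` G) = UNIV"
proof -
  let ?O = "(\<lambda>g. \<pi> g v) ` G"
  have "\<forall>g\<in>G. \<forall>u\<in>span ?O. \<pi> g u \<in> span ?O"
  proof (intro ballI)
    fix g u assume g: "g \<in> G" and u: "u \<in> span ?O"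
    have "\<pi> g u \<in> \<pi> g ` span ?O" using u by (rule imageI)
    also have "\<dots> = span (\<pi> g ` ?O)" by (rule span_linear_image[OF linear_blinfun_apply, symmetric])
    also have "\<dots> \<subseteq> span ?O" by (rule span_mono[OF representation_orbit_invariant[OF G \<pi> g]])
    finally show "\<pi> g u \<in> span ?O" .
  qed
  then have "span ?O = {0} \<or> span ?O = UNIV"
    using irr[unfolded irreducible_rep_def, rule_format, OF conjI[OF subspace_span]] by blast
  moreover have "v \<in> span ?O"
  proof (rule span_base)
    have "v = \<pi> id_blinfun v" by (simp add: representationD(2)[OF \<pi>])
    then show "v \<in> ?O" using compact_connected_linear_groupD(2)[OF G] by (rule image_eqI)
  qed
  ultimately show ?thesis using assms(4) by auto
qed

lemma representation_interior_convex_hull_orbit: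
  assumes G: "compact_connected_linear_group G" and \<pi>: "representation G \<pi>"
    and "h \<in> G" "F \<subseteq> G"
  shows "\<pi> h ` interior (convex hull ((\<lambda>g. \<pi> g v) ` F))
    = interior (convex hull ((\<lambda>g. \<pi> g v) ` (\<lambda>g. h o\<^sub>L g) ` F))"
proof -
  have "\<pi> h \<in> \<pi> ` G" using assms(3) by (rule imageI)
  then have "inj (blinfun_apply (\<pi> h))"
    by (rule compact_operator_group_inj[OF compact_operator_group_representation_image[OF G \<pi>]])
  then have "\<pi> h ` interior (convex hull ((\<lambda>g. \<pi> g v) ` F))
      = interior (\<pi> h ` (convex hull ((\<lambda>g. \<pi> g v) ` F)))"
    by (rule interior_injective_linear_image[OF linear_blinfun_apply, symmetric])
  also have "\<dots> = interior (convex hull (\<pi> h ` (\<lambda>g. \<pi> g v) ` F))"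
    by (simp only: convex_hull_linear_image[OF linear_blinfun_apply])
  also have "\<pi> h ` (\<lambda>g. \<pi> g v) ` F = (\<lambda>g. \<pi> g v) ` (\<lambda>g. h o\<^sub>L g) ` F"
    unfolding image_image using representation_apply_compose[OF \<pi> assms(3)] assms(4)
    by (intro image_cong) auto
  finally show ?thesis .
qed

lemma finite_orbit_zero_in_convex_hull:
  assumes "compact_connected_linear_group G" "representation G \<pi>"
    and "irreducible_rep G \<pi>" "nontrivial_rep G \<pi>"
  obtains S where "finite S" "S \<subseteq> G" "0 \<in> convex hull ((\<lambda>g. \<pi> g w) ` S)"
proof -
  obtain T where T: "finite T" "T \<subseteq> (\<lambda>g. \<pi> g w) ` G" "0 \<in> convex hull T"
    using convex_hull_finite_subset[OF zero_in_convex_hull_orbit[OF assms]] by blast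
  then obtain S where "S \<subseteq> G" "finite S" "T = (\<lambda>g. \<pi> g w) ` S"
    using finite_subset_image[OF T(1,2)] by blast
  then show thesis using that T(3) by blast
qed

lemma finite_orbit_span_eq_UNIV:
  assumes "compact_connected_linear_group G" "representation G \<pi>" "irreducible_rep G \<pi>" "v \<noteq> 0"
  obtains S where "finite S" "S \<subseteq> G" "span ((\<lambda>g. \<pi> g v) ` S) = UNIV"
proof -
  obtain T where T: "finite T" "T \<subseteq> (\<lambda>g. \<pi> g v) ` G" "span T = UNIV"
    using finite_subset_span_eq[of "(\<lambda>g. \<pi> g v) ` G"] span_orbit_eq_UNIV[OF assms] by metis
  then obtain S where "S \<subseteq> G" "finite S" "T = (\<lambda>g. \<pi> g v) ` S"
    using finite_subset_image[OF T(1,2)] by blast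
  then show thesis using that T(3) by blast
qed

lemma orbit_subset_interior_convex_hull_orbit:
  assumes G: "compact_connected_linear_group G" and \<pi>: "representation G \<pi>"
    and "H \<subseteq> G" "F \<subseteq> G" "p \<in> interior (convex hull ((\<lambda>g. \<pi> g v) ` F))"
  shows "(\<lambda>h. \<pi> h p) ` H
    \<subseteq> interior (convex hull ((\<lambda>g. \<pi> g v) ` (\<lambda>(h, g). h o\<^sub>L g) ` (H \<times> F)))"
proof
  fix y assume "y \<in> (\<lambda>h. \<pi> h p) ` H"
  then obtain h where h: "h \<in> H" "y = \<pi> h p" by blast
  then have "y \<in> interior (convex hull ((\<lambda>g. \<pi> g v) ` (\<lambda>g. h o\<^sub>L g) ` F))"
    using representation_interior_convex_hull_orbit[OF G \<pi> _ assms(4)] assms(3,5) by blast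
  moreover have "(\<lambda>g. h o\<^sub>L g) ` F \<subseteq> (\<lambda>(h, g). h o\<^sub>L g) ` (H \<times> F)" using h(1) by force
  ultimately show "y \<in> interior (convex hull ((\<lambda>g. \<pi> g v) ` (\<lambda>(h, g). h o\<^sub>L g) ` (H \<times> F)))"
    by (meson hull_mono image_mono interior_mono subsetD)
qed

lemma finite_orbit_interior_convex_hull_nonempty:
  assumes G: "compact_connected_linear_group G" and \<pi>: "representation G \<pi>"
    and irr: "irreducible_rep G \<pi>" and nt: "nontrivial_rep G \<pi>" and "v \<noteq> 0"
  obtains F where "finite F" "F \<subseteq> G" "interior (convex hull ((\<lambda>g. \<pi> g v) ` F)) \<noteq> {}"
proof -
  obtain S0 where S0: "finite S0" "S0 \<subseteq> G" "0 \<in> convex hull ((\<lambda>g. \<pi> g v) ` S0)"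
    by (rule finite_orbit_zero_in_convex_hull[OF G \<pi> irr nt])
  obtain S1 where S1: "finite S1" "S1 \<subseteq> G" "span ((\<lambda>g. \<pi> g v) ` S1) = UNIV"
    by (rule finite_orbit_span_eq_UNIV[OF G \<pi> irr assms(5)])
  have "convex hull ((\<lambda>g. \<pi> g v) ` S0) \<subseteq> convex hull ((\<lambda>g. \<pi> g v) ` (S0 \<union> S1))"
    by (intro hull_mono image_mono) simp
  moreover have "span ((\<lambda>g. \<pi> g v) ` S1) \<subseteq> span ((\<lambda>g. \<pi> g v) ` (S0 \<union> S1))"
    by (intro span_mono image_mono) simp
  ultimately have "interior (convex hull ((\<lambda>g. \<pi> g v) ` (S0 \<union> S1))) \<noteq> {}"
    using S0(3) S1(3) by (intro interior_convex_hull_nonempty) auto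
  then show thesis using that S0(1,2) S1(1,2) by blast
qed

theorem theorem2p2:
  fixes G :: "('w::euclidean_space \<Rightarrow>\<^sub>L 'w) set"
    and \<pi> :: "('w \<Rightarrow>\<^sub>L 'w) \<Rightarrow> ('v::euclidean_space \<Rightarrow>\<^sub>L 'v)"
    and v :: 'v
  assumes "compact_connected_linear_group G"
    and "simple_lie_algebra (lie_algebra_of G)"
    and "representation G \<pi>"
    and "irreducible_rep G \<pi>"
    and "nontrivial_rep G \<pi>"
    and "v \<noteq> 0"
  shows "\<exists>S. finite S \<and> S \<subseteq> G \<and> 0 \<in> interior (convex hull ((\<lambda>g. \<pi> g v) ` S))"
proof -
  note G = assms(1) and \<pi> = assms(3) and irr = assms(4) and nt = assms(5)
  obtain F where F: "finite F" "F \<subseteq> G" "interior (convex hull ((\<lambda>g. \<pi> g v) ` F)) \<noteq> {}"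
    by (rule finite_orbit_interior_convex_hull_nonempty[OF G \<pi> irr nt assms(6)])
  then obtain p where p: "p \<in> interior (convex hull ((\<lambda>g. \<pi> g v) ` F))" by blast
  obtain H where H: "finite H" "H \<subseteq> G" "0 \<in> convex hull ((\<lambda>h. \<pi> h p) ` H)"
    by (rule finite_orbit_zero_in_convex_hull[OF G \<pi> irr nt])
  let ?S = "(\<lambda>(h, g). h o\<^sub>L g) ` (H \<times> F)"
  have "convex hull ((\<lambda>h. \<pi> h p) ` H) \<subseteq> interior (convex hull ((\<lambda>g. \<pi> g v) ` ?S))"
    using orbit_subset_interior_convex_hull_orbit[OF G \<pi> H(2) F(2) p]
    by (intro hull_minimal convex_interior convex_convex_hull)
  moreover have "finite ?S" using H(1) F(1) by simp
  moreover have "?S \<subseteq> G"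
    using H(2) F(2) by (auto intro: compact_connected_linear_groupD(3)[OF G])
  ultimately show ?thesis using H(3) by blast
qed

end
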